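(* Let $n\ge1$ and $d\ge1$ be integers, $p\in(0,1)$, $\delta\in(0,1)$, and let $I\subseteq[n]$ be a fixed set with $|I|\le d$. Let $m$ be a positive integer with $$m\ \ge\ \max_{0\le w\le d-1}\frac{(d-w)\ln n+\ln(1/\delta)+\ln(d^22^d)}{\min\left(\ln\frac{1}{1-2p^d+2p^{2d-w}},\ \ln\frac{1}{1+p^d-p^w}\right)}$$ (maximum over integers $w$). Let $M$ be a random $m\times n$ matrix whose entries are independent, each equal to $0$ with probability $p$ and to $1$ with probability $1-p$. Then with probability at least $1-\delta$ the matrix $M$ is $(I,d)$-separable.
   Context: For $J\subseteq[n]$ and $a\in\{0,1\}^n$, $T(J,a)=1$ if $a_j=1$ for some $j\in J$ and $T(J,a)=0$ otherwise. For an $m\times n$ 0/1 matrix $M$ with rows $M_1,\dots,M_m$, $T(J,M)=(T(J,M_i))_{i=1}^m$. The matrix $M$ is $(I,d)$-separable if for every $J\subseteq[n]$ with $|J|\le d$ and $J\ne I$ we have $T(J,M)\ne T(I,M)$. *)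

theory Defs
  imports "HOL-Probability.Probability"
begin

text \<open>A 0/1 vector a in {0,1}^n is a function nat => bool on the index set {1..n}
  (True = 1). T(J,a) = 1 iff a_j = 1 for some j in J.\<close>
definition T :: "nat set \<Rightarrow> (nat \<Rightarrow> bool) \<Rightarrow> bool" where
  "T J a = (\<exists>j\<in>J. a j)"

text \<open>An m x n 0/1 matrix is a function M :: nat \<times> nat => bool, entry (i,j) for
  i in {1..m}, j in {1..n}. Row i is (\<lambda>j. M (i,j)). T(J,M) is the vector of T(J,M_i).\<close>
definition T_mat :: "nat \<Rightarrow> nat set \<Rightarrow> (nat \<times> nat \<Rightarrow> bool) \<Rightarrow> (nat \<Rightarrow> bool)" where
  "T_mat m J M = (\<lambda>i. if i \<in> {1..m} then T J (\<lambda>j. M (i, j)) else False)"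

definition separable :: "nat \<Rightarrow> nat \<Rightarrow> (nat \<times> nat \<Rightarrow> bool) \<Rightarrow> nat set \<Rightarrow> nat \<Rightarrow> bool" where
  "separable m n M I d =
     (\<forall>J. J \<subseteq> {1..n} \<and> card J \<le> d \<and> J \<noteq> I \<longrightarrow> T_mat m J M \<noteq> T_mat m I M)"

definition random_matrix :: "nat \<Rightarrow> nat \<Rightarrow> real \<Rightarrow> (nat \<times> nat \<Rightarrow> bool) pmf" where
  "random_matrix m n p = Pi_pmf ({1..m} \<times> {1..n}) False (\<lambda>_. bernoulli_pmf (1 - p))"

end

(* A single row fails to tell J from I with probability 1 - p^|I| - p^|J| + 2 p^|I \<union> J|, and the rows
   are independent. Writing w = d - max 1 |J - I|, this probability is at most the larger of
   1 - 2p^d + 2p^(2d-w) and 1 + p^d - p^w, so the bound on m forces the probability that all m rows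
   fail to be at most \<delta> / (d^2 2^d n^max 1 |J - I|). Splitting J into J \<inter> I and J - I, the union
   bound over all J sums these terms to at most \<delta>. *)

theory Submission
  imports Defs
begin

lemma Pi_pmf_Times_curry:
  assumes "finite A" "finite B"
  shows "map_pmf curry (Pi_pmf (A \<times> B) dflt p) =
           Pi_pmf A (\<lambda>_. dflt) (\<lambda>a. Pi_pmf B dflt (\<lambda>b. p (a, b)))"
proof (rule pmf_eqI)
  fix g :: "'a \<Rightarrow> 'b \<Rightarrow> 'c"
  have "pmf (map_pmf curry (Pi_pmf (A \<times> B) dflt p)) g = pmf (Pi_pmf (A \<times> B) dflt p) (case_prod g)"
  proof -
    have "inj (curry :: ('a \<times> 'b \<Rightarrow> 'c) \<Rightarrow> _)"
      by (intro injI) (metis case_prod_curry)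
    from pmf_map_inj'[OF this, of _ "case_prod g"] show ?thesis by simp
  qed
  also have "\<dots> = pmf (Pi_pmf A (\<lambda>_. dflt) (\<lambda>a. Pi_pmf B dflt (\<lambda>b. p (a, b)))) g"
  proof (cases "\<forall>a b. (a, b) \<notin> A \<times> B \<longrightarrow> g a b = dflt")
    case True
    then show ?thesis
      using assms by (simp add: pmf_Pi fun_eq_iff prod.cartesian_product case_prod_unfold)
  next
    case False
    then obtain a b where ab: "(a, b) \<notin> A \<times> B" "g a b \<noteq> dflt" by blast
    show ?thesis
    proof (cases "a \<in> A")
      case True
      then have "pmf (Pi_pmf B dflt (\<lambda>b. p (a, b))) (g a) = 0"
        using ab assms by (auto intro: pmf_Pi_outside)
      then show ?thesis using True ab assms by (auto simp: pmf_Pi fun_eq_iff intro: prod_zero)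
    next
      case False
      then show ?thesis using ab assms by (auto simp: pmf_Pi fun_eq_iff)
    qed
  qed
  finally show "pmf (map_pmf curry (Pi_pmf (A \<times> B) dflt p)) g =
      pmf (Pi_pmf A (\<lambda>_. dflt) (\<lambda>a. Pi_pmf B dflt (\<lambda>b. p (a, b)))) g" .
qed

lemma prob_Pi_pmf_bernoulli_all_False:
  assumes "finite A" "S \<subseteq> A" "0 \<le> q" "q \<le> 1"
  shows "measure_pmf.prob (Pi_pmf A False (\<lambda>_. bernoulli_pmf q)) {r. \<forall>j\<in>S. \<not> r j} = (1 - q) ^ card S"
proof -
  have "{r. \<forall>j\<in>S. \<not> r j} = Pi A (\<lambda>j. if j \<in> S then {False} else UNIV)"
    using assms(2) by (auto simp: Pi_def)
  then have "measure_pmf.prob (Pi_pmf A False (\<lambda>_. bernoulli_pmf q)) {r. \<forall>j\<in>S. \<not> r j}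
      = (\<Prod>j\<in>A. if j \<in> S then 1 - q else 1)"
    using assms by (simp add: measure_Pi_pmf_Pi measure_pmf_single if_distrib cong: if_cong)
  also have "\<dots> = (1 - q) ^ card S"
    using assms(1,2) by (simp add: prod.If_cases Int_absorb1)
  finally show ?thesis .
qed

lemma prob_Pi_pmf_bernoulli_T_eq:
  assumes "finite A" "I \<subseteq> A" "J \<subseteq> A" "0 \<le> p" "p \<le> 1"
  shows "measure_pmf.prob (Pi_pmf A False (\<lambda>_. bernoulli_pmf (1 - p))) {r. T J r = T I r}
           = 1 - p ^ card I - p ^ card J + 2 * p ^ card (I \<union> J)"
proof -
  let ?P = "measure_pmf.prob (Pi_pmf A False (\<lambda>_. bernoulli_pmf (1 - p)))"
  let ?Z = "\<lambda>S. {r. \<not> T S r}"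
  have Z: "?P (?Z S) = p ^ card S" if "S \<subseteq> A" for S
    using prob_Pi_pmf_bernoulli_all_False[OF assms(1) that, of "1 - p"] assms(4,5)
    by (simp add: T_def)
  have ZZ: "?Z I \<inter> ?Z J = ?Z (I \<union> J)"
    by (auto simp: T_def)
  have disagree: "{r. T J r \<noteq> T I r} = (?Z I - ?Z J) \<union> (?Z J - ?Z I)"
    by auto
  have "?P {r. T J r \<noteq> T I r} = ?P (?Z I - ?Z J) + ?P (?Z J - ?Z I)"
    unfolding disagree by (rule measure_pmf.finite_measure_Union) auto
  also have "\<dots> = (p ^ card I - p ^ card (I \<union> J)) + (p ^ card J - p ^ card (I \<union> J))"
    using assms(2,3) ZZ by (simp add: measure_pmf.finite_measure_Diff' Z Int_commute)
  finally show ?thesis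
    using measure_pmf.prob_compl[of "{r. T J r \<noteq> T I r}"]
    by (simp add: Compl_eq_Diff_UNIV[symmetric] Collect_neg_eq[symmetric])
qed

lemma prob_random_matrix_T_mat_eq:
  assumes "I \<subseteq> {1..n}" "J \<subseteq> {1..n}" "0 \<le> p" "p \<le> 1"
  shows "measure_pmf.prob (random_matrix m n p) {M. T_mat m J M = T_mat m I M}
           = (1 - p ^ card I - p ^ card J + 2 * p ^ card (I \<union> J)) ^ m"
proof -
  let ?row = "Pi_pmf {1..n} False (\<lambda>_. bernoulli_pmf (1 - p))"
  have rows: "map_pmf curry (random_matrix m n p) = Pi_pmf {1..m} (\<lambda>_. False) (\<lambda>_. ?row)"
    by (simp add: random_matrix_def Pi_pmf_Times_curry)
  have "{M. T_mat m J M = T_mat m I M} = curry -` Pi {1..m} (\<lambda>_. {r. T J r = T I r})"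
    by (auto simp: T_mat_def fun_eq_iff Pi_def curry_def)
  then have "measure_pmf.prob (random_matrix m n p) {M. T_mat m J M = T_mat m I M}
      = measure_pmf.prob (Pi_pmf {1..m} (\<lambda>_. False) (\<lambda>_. ?row)) (Pi {1..m} (\<lambda>_. {r. T J r = T I r}))"
    by (simp only: rows[symmetric] measure_map_pmf)
  also have "\<dots> = (\<Prod>i\<in>{1..m}. measure_pmf.prob ?row {r. T J r = T I r})"
    by (simp add: measure_Pi_pmf_Pi)
  finally show ?thesis
    using assms by (simp add: prob_Pi_pmf_bernoulli_T_eq)
qed

text \<open>Bound on the probability that one row does not separate \<open>J\<close> from \<open>I\<close> when
  \<open>|J - I| = d - w\<close>; \<open>ln (1 / row_agree_bound p d w)\<close> is the denominator in the bound on \<open>m\<close>.\<close>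
definition row_agree_bound :: "real \<Rightarrow> nat \<Rightarrow> nat \<Rightarrow> real" where
  "row_agree_bound p d w = max (1 - 2 * p ^ d + 2 * p ^ (2 * d - w)) (1 + p ^ d - p ^ w)"

lemma row_agree_bound_bounds:
  assumes "0 < p" "p < 1" "w < d"
  shows "0 < 1 - 2 * p ^ d + 2 * p ^ (2 * d - w)" "0 < 1 + p ^ d - p ^ w"
    and "row_agree_bound p d w < 1"
proof -
  have pd: "0 < p ^ d" "p ^ d < 1" "p ^ d < p ^ w" "p ^ (2 * d - w) < p ^ d" "p ^ w \<le> 1"
    using assms by (auto intro: power_strict_decreasing power_le_one simp: power_less_one_iff)
  have "0 < (1 - p ^ d)\<^sup>2 + (p ^ d)\<^sup>2"
    using pd by (simp add: add_pos_nonneg)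
  also have "\<dots> = 1 - 2 * p ^ d + 2 * p ^ (2 * d)"
    by (simp add: power2_eq_square algebra_simps flip: power_add mult_2)
  also have "\<dots> \<le> 1 - 2 * p ^ d + 2 * p ^ (2 * d - w)"
    using assms by (simp add: power_decreasing)
  finally show "0 < 1 - 2 * p ^ d + 2 * p ^ (2 * d - w)" .
  show "0 < 1 + p ^ d - p ^ w"
    using pd by simp
  show "row_agree_bound p d w < 1"
    using pd by (simp add: row_agree_bound_def)
qed

lemma ln_inverse_max:
  fixes a b :: real
  assumes "0 < a" "0 < b"
  shows "ln (1 / max a b) = min (ln (1 / a)) (ln (1 / b))"
  using assms by (simp add: max_def min_def ln_div)

lemma agree_prob_le_proper_subset:
  fixes p :: real
  assumes "0 \<le> p" "p \<le> 1" "b < a" "a \<le> d"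
  shows "1 + p ^ a - p ^ b \<le> 1 + p ^ d - p ^ (d - 1)"
proof -
  have "p ^ (d - 1) - p ^ d = p ^ (d - 1) * (1 - p)"
    using assms(3,4) by (cases d) (auto simp: algebra_simps)
  also have "\<dots> \<le> p ^ b * (1 - p)"
    using assms by (intro mult_right_mono power_decreasing) auto
  also have "\<dots> \<le> p ^ b * (1 - p ^ (a - b))"
    using assms power_decreasing[of 1 "a - b" p] by (intro mult_left_mono diff_left_mono) auto
  also have "\<dots> = p ^ b - p ^ a"
    using assms(3) by (simp add: algebra_simps flip: power_add)
  finally show ?thesis by simp
qed

lemma agree_prob_le_new_elements:
  fixes p :: real
  assumes "0 \<le> p" "p \<le> 1" "1 \<le> k" "k \<le> b" "b \<le> a + k" "a \<le> d" "b \<le> d"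
  shows "1 - p ^ a - p ^ b + 2 * p ^ (a + k)
           \<le> max (1 - 2 * p ^ d + 2 * p ^ (d + k)) (1 + p ^ d - p ^ (d - k))"
proof -
  have split_d: "p ^ (d - k) * p ^ k = p ^ d"
    using assms(4,7) by (simp flip: power_add)
  have pk: "p ^ k \<le> 1"
    using assms by (simp add: power_le_one)
  show ?thesis
  proof (cases "a \<le> d - k")
    case True
    have "1 - p ^ a - p ^ b + 2 * p ^ (a + k) \<le> 1 - p ^ a * (1 - p ^ k)"
      using assms power_decreasing[of b "a + k" p] by (simp add: power_add algebra_simps)
    also have "\<dots> \<le> 1 - p ^ (d - k) * (1 - p ^ k)"
      using assms True pk by (intro diff_left_mono mult_right_mono power_decreasing) auto
    also have "\<dots> = 1 + p ^ d - p ^ (d - k)"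
      using split_d by (simp add: algebra_simps)
    finally show ?thesis by simp
  next
    case False
    text \<open>The bound is affine in \<open>p ^ a \<in> [p ^ d, p ^ (d - k)]\<close>, so one endpoint dominates.\<close>
    have "1 - p ^ a - p ^ b + 2 * p ^ (a + k) \<le> 1 - p ^ d + p ^ a * (2 * p ^ k - 1)"
      using assms power_decreasing[of b d p] by (simp add: power_add algebra_simps)
    also have "\<dots> \<le> max (1 - 2 * p ^ d + 2 * p ^ (d + k)) (1 + p ^ d - p ^ (d - k))"
    proof (cases "2 * p ^ k - 1 \<ge> 0")
      case True
      have "p ^ a * (2 * p ^ k - 1) \<le> p ^ (d - k) * (2 * p ^ k - 1)"
        using assms False True by (intro mult_right_mono power_decreasing) auto
      then show ?thesis
        using split_d by (simp add: algebra_simps)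
    next
      case False
      have "p ^ a * (2 * p ^ k - 1) \<le> p ^ d * (2 * p ^ k - 1)"
        using assms False by (intro mult_right_mono_neg power_decreasing) auto
      then show ?thesis
        by (simp add: power_add algebra_simps)
    qed
    finally show ?thesis .
  qed
qed

lemma agree_prob_le_row_agree_bound:
  fixes p :: real
  assumes "0 \<le> p" "p \<le> 1" "finite I" "finite J" "J \<noteq> I" "card I \<le> d" "card J \<le> d"
  shows "1 - p ^ card I - p ^ card J + 2 * p ^ card (I \<union> J)
           \<le> row_agree_bound p d (d - max 1 (card (J - I)))"
proof -
  have "card (I \<union> (J - I)) = card I + card (J - I)"
    using assms(3,4) by (intro card_Un_disjoint) auto
  then have card_Un: "card (I \<union> J) = card I + card (J - I)"
    by simp
  have new_le: "card (J - I) \<le> card J"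
    using assms(4) by (intro card_mono) auto
  show ?thesis
  proof (cases "card (J - I) = 0")
    case True
    then have "J \<subset> I"
      using assms(4,5) by auto
    then have "card J < card I"
      using assms(3) by (simp add: psubset_card_mono)
    moreover have "card (I \<union> J) = card I"
      using card_Un True by simp
    ultimately show ?thesis
      using agree_prob_le_proper_subset[of p "card J" "card I" d] assms True
      by (simp add: row_agree_bound_def)
  next
    case False
    then have new_ge: "1 \<le> card (J - I)"
      by simp
    have "card J \<le> card (I \<union> J)"
      using assms(3,4) by (intro card_mono) auto
    then have "card J \<le> card I + card (J - I)"
      using card_Un by simp
    note agree_prob_le_new_elements[OF assms(1,2) new_ge new_le this assms(6,7)]
    moreover have "2 * d - (d - card (J - I)) = d + card (J - I)"
      using new_le assms(7) by simp
    ultimately show ?thesis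
      using new_ge card_Un by (simp add: row_agree_bound_def)
  qed
qed

lemma sum_card_subsets_card_le:
  fixes f :: "nat \<Rightarrow> 'b :: comm_semiring_1"
  assumes "finite X"
  shows "(\<Sum>K | K \<subseteq> X \<and> card K \<le> d. f (card K)) = (\<Sum>k\<le>d. of_nat (card X choose k) * f k)"
proof -
  let ?U = "{K. K \<subseteq> X \<and> card K \<le> d}"
  have "finite ?U"
    using assms by (auto intro: finite_subset[of _ "Pow X"])
  then have "(\<Sum>K\<in>?U. f (card K)) = (\<Sum>k\<le>d. \<Sum>K | K \<in> ?U \<and> card K = k. f (card K))"
    by (intro sum.group[symmetric]) auto
  also have "\<dots> = (\<Sum>k\<le>d. of_nat (card X choose k) * f k)"
  proof (intro sum.cong refl)
    fix k assume "k \<in> {..d}"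
    then have "{K. K \<in> ?U \<and> card K = k} = {K. K \<subseteq> X \<and> card K = k}"
      by auto
    then show "(\<Sum>K | K \<in> ?U \<and> card K = k. f (card K)) = of_nat (card X choose k) * f k"
      using n_subsets[OF assms, of k] by simp
  qed
  finally show ?thesis .
qed

lemma sum_Diff_le_pow2_card:
  fixes g :: "'a set \<Rightarrow> real"
  assumes "finite I" "finite X" "\<And>K. 0 \<le> g K"
  shows "(\<Sum>J | J \<subseteq> I \<union> X \<and> card J \<le> d. g (J - I))
           \<le> 2 ^ card I * (\<Sum>K | K \<subseteq> X \<and> card K \<le> d. g K)"
proof -
  let ?S = "{J. J \<subseteq> I \<union> X \<and> card J \<le> d}" and ?U = "{K. K \<subseteq> X \<and> card K \<le> d}"
  let ?split = "\<lambda>J. (J \<inter> I, J - I)"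
  have "finite ?U"
    using assms by (auto intro: finite_subset[of _ "Pow X"])
  have "?split ` ?S \<subseteq> Pow I \<times> ?U"
  proof clarsimp
    fix J assume "J \<subseteq> I \<union> X" "card J \<le> d"
    moreover have "card (J - I) \<le> card J"
      using assms \<open>J \<subseteq> I \<union> X\<close> by (intro card_mono) (auto intro: finite_subset)
    ultimately show "J - I \<subseteq> X \<and> card (J - I) \<le> d"
      by auto
  qed
  have "(\<Sum>J\<in>?S. g (J - I)) = (\<Sum>y\<in>?split ` ?S. g (snd y))"
    by (subst sum.reindex) (auto simp: inj_on_def)
  also have "\<dots> \<le> (\<Sum>y\<in>Pow I \<times> ?U. g (snd y))"
    using assms \<open>finite ?U\<close> \<open>?split ` ?S \<subseteq> Pow I \<times> ?U\<close> by (intro sum_mono2) auto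
  also have "\<dots> = 2 ^ card I * (\<Sum>K\<in>?U. g K)"
    using assms(1) by (simp add: sum.cartesian_product' card_Pow)
  finally show ?thesis .
qed

lemma sum_binomial_divide_power_le:
  assumes "N \<le> n" "1 \<le> d"
  shows "(\<Sum>k\<le>d. real (N choose k) / real n ^ max 1 k) \<le> (1 + real N) / n + (real d - 1)"
proof -
  have "real (N choose k) / real n ^ max 1 k \<le> 1" if "2 \<le> k" for k
  proof -
    have "N choose k \<le> N ^ k"
      by (cases "k \<le> N") (auto simp: binomial_le_pow binomial_eq_0)
    also have "\<dots> \<le> n ^ k"
      using assms(1) by (rule power_mono) simp
    finally show ?thesis
      using that assms(1)
      by (cases "n = 0") (auto simp: max_def field_simps binomial_eq_0 simp flip: of_nat_power)
  qed
  then have "(\<Sum>k\<in>{2..d}. real (N choose k) / real n ^ max 1 k) \<le> (\<Sum>k\<in>{2..d}. 1)"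
    by (intro sum_mono) auto
  moreover have "{..d} = {0, 1} \<union> {2..d}"
    using assms(2) by auto
  ultimately show ?thesis
    using assms(2) by (simp add: sum.union_disjoint add_divide_distrib)
qed

lemma two_pow_mul_le_sq_mul_two_pow:
  assumes "a \<le> d" "a \<le> n" "1 \<le> n" "1 \<le> d"
  shows "2 ^ a * ((1 + real (n - a)) / n + (real d - 1)) \<le> real d ^ 2 * 2 ^ d"
proof (cases "a = 0")
  case True
  have "(1 + real n) / n \<le> 2"
    using assms(3) by (simp add: field_simps)
  then have "2 ^ a * ((1 + real (n - a)) / n + (real d - 1)) \<le> 2 * real d"
    using True assms(4) by simp
  also have "\<dots> \<le> 2 ^ d * real d"
    using assms(4) power_increasing[of 1 d "2::real"] by (intro mult_right_mono) auto
  also have "\<dots> \<le> 2 ^ d * real d ^ 2"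
    using assms(4) by (intro mult_left_mono) (auto simp: power2_eq_square)
  finally show ?thesis
    by (simp add: mult.commute)
next
  case False
  have "(1 + real (n - a)) / n \<le> 1"
    using False assms(2,3) by (simp add: of_nat_diff field_simps)
  then have "2 ^ a * ((1 + real (n - a)) / n + (real d - 1)) \<le> 2 ^ d * real d"
    using assms(1,4) by (intro mult_mono) (auto intro: power_increasing)
  also have "\<dots> \<le> 2 ^ d * real d ^ 2"
    using assms(4) by (intro mult_left_mono) (auto simp: power2_eq_square)
  finally show ?thesis
    by (simp add: mult.commute)
qed

lemma sum_inverse_power_card_Diff_le:
  assumes "I \<subseteq> {1..n}" "1 \<le> n" "1 \<le> d" "card I \<le> d"
  shows "(\<Sum>J | J \<subseteq> {1..n} \<and> card J \<le> d \<and> J \<noteq> I. 1 / real n ^ max 1 (card (J - I)))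
           \<le> real d ^ 2 * 2 ^ d"
proof -
  define X where "X = {1..n} - I"
  have IX: "I \<union> X = {1..n}" "finite I" "finite X" "card X = n - card I"
    using assms(1) by (auto simp: X_def card_Diff_subset finite_subset)
  let ?g = "\<lambda>K. 1 / real n ^ max 1 (card K)"
  have "finite {J. J \<subseteq> I \<union> X \<and> card J \<le> d}"
    using IX by (auto intro: finite_subset[of _ "Pow {1..n}"])
  then have "(\<Sum>J | J \<subseteq> {1..n} \<and> card J \<le> d \<and> J \<noteq> I. ?g (J - I))
      \<le> (\<Sum>J | J \<subseteq> I \<union> X \<and> card J \<le> d. ?g (J - I))"
    using IX(1) by (intro sum_mono2) auto
  also have "\<dots> \<le> 2 ^ card I * (\<Sum>K | K \<subseteq> X \<and> card K \<le> d. ?g K)"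
    using IX by (intro sum_Diff_le_pow2_card) auto
  also have "(\<Sum>K | K \<subseteq> X \<and> card K \<le> d. ?g K) = (\<Sum>k\<le>d. real (card X choose k) / real n ^ max 1 k)"
    using sum_card_subsets_card_le[OF IX(3), where d = d and f = "\<lambda>k. 1 / real n ^ max 1 k"]
    by simp
  also have "\<dots> \<le> (1 + real (n - card I)) / n + (real d - 1)"
    unfolding IX(4) using assms(3) by (intro sum_binomial_divide_power_le) auto
  finally have "(\<Sum>J | J \<subseteq> {1..n} \<and> card J \<le> d \<and> J \<noteq> I. ?g (J - I))
      \<le> 2 ^ card I * ((1 + real (n - card I)) / n + (real d - 1))"
    by (simp add: mult_left_mono)
  also have "\<dots> \<le> real d ^ 2 * 2 ^ d"
    using assms card_mono[OF _ assms(1)] by (intro two_pow_mul_le_sq_mul_two_pow) auto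
  finally show ?thesis .
qed

lemma power_le_if_ln_ratio_le:
  fixes Q c :: real
  assumes "0 < Q" "Q < 1" "0 < c" "ln (1 / c) / ln (1 / Q) \<le> real m"
  shows "Q ^ m \<le> c"
proof -
  have "0 < ln (1 / Q)"
    using assms(1,2) by simp
  then have "ln (1 / c) \<le> real m * ln (1 / Q)"
    using assms(4) by (simp add: divide_le_eq)
  then have "ln (Q ^ m) \<le> ln c"
    using assms(1,3) by (simp add: ln_div ln_realpow)
  then show ?thesis
    using assms(1,3) by simp
qed

lemma prob_T_mat_eq_le:
  fixes p \<delta> :: real
  assumes "0 < p" "p < 1" "0 < \<delta>" "1 \<le> n" "1 \<le> d"
    and "I \<subseteq> {1..n}" "card I \<le> d" "J \<subseteq> {1..n}" "card J \<le> d" "J \<noteq> I"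
    and m_ge: "real m \<ge> Max ((\<lambda>w. ((real d - real w) * ln (real n) + ln (1 / \<delta>) + ln (real d ^ 2 * 2 ^ d))
             / min (ln (1 / (1 - 2 * p ^ d + 2 * p ^ (2 * d - w)))) (ln (1 / (1 + p ^ d - p ^ w)))) ` {0..d - 1})"
  shows "measure_pmf.prob (random_matrix m n p) {M. T_mat m J M = T_mat m I M}
           \<le> \<delta> / (real d ^ 2 * 2 ^ d * real n ^ max 1 (card (J - I)))"
proof -
  define k where "k = max 1 (card (J - I))"
  define w where "w = d - k"
  define q where "q = 1 - p ^ card I - p ^ card J + 2 * p ^ card (I \<union> J)"
  define c where "c = \<delta> / (real d ^ 2 * 2 ^ d * real n ^ k)"
  have fin: "finite I" "finite J"
    using assms(6,8) by (auto intro: finite_subset)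
  have "card (J - I) \<le> card J"
    using fin by (intro card_mono) auto
  then have k: "1 \<le> k" "k \<le> d" "real d - real w = real k"
    using assms(5,9) by (auto simp: k_def w_def of_nat_diff)
  have "w < d"
    using k by (simp add: w_def)
  note A_B = row_agree_bound_bounds[OF assms(1,2) this]
  then have Q: "0 < row_agree_bound p d w" "row_agree_bound p d w < 1"
    by (auto simp: row_agree_bound_def)
  have "q = measure_pmf.prob (Pi_pmf {1..n} False (\<lambda>_. bernoulli_pmf (1 - p))) {r. T J r = T I r}"
    using prob_Pi_pmf_bernoulli_T_eq[of "{1..n}" I J p] assms by (simp add: q_def)
  then have "0 \<le> q"
    by simp
  moreover have "q \<le> row_agree_bound p d w"
    using agree_prob_le_row_agree_bound[of p I J d] assms fin by (simp add: q_def w_def k_def)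
  ultimately have "q ^ m \<le> row_agree_bound p d w ^ m"
    by (intro power_mono)
  also have "\<dots> \<le> c"
  proof (rule power_le_if_ln_ratio_le[OF Q])
    show "0 < c"
      using assms(3,4,5) by (simp add: c_def)
    have "ln (1 / c) = (real d - real w) * ln (real n) + ln (1 / \<delta>) + ln (real d ^ 2 * 2 ^ d)"
      using assms(3,4,5) k(3) by (simp add: c_def ln_div ln_mult ln_realpow)
    moreover have "ln (1 / row_agree_bound p d w)
        = min (ln (1 / (1 - 2 * p ^ d + 2 * p ^ (2 * d - w)))) (ln (1 / (1 + p ^ d - p ^ w)))"
      unfolding row_agree_bound_def using A_B(1,2) by (rule ln_inverse_max)
    ultimately show "ln (1 / c) / ln (1 / row_agree_bound p d w) \<le> real m"
      using k by (auto intro!: order_trans[OF Max_ge m_ge] rev_image_eqI[of w] simp: w_def)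
  qed
  finally show ?thesis
    using prob_random_matrix_T_mat_eq[of I n J p m] assms by (simp add: q_def c_def k_def)
qed

lemma prob_not_separable_le:
  fixes p \<delta> :: real
  assumes "1 \<le> n" "1 \<le> d" "0 < p" "p < 1" "0 < \<delta>" "I \<subseteq> {1..n}" "card I \<le> d"
    and m_ge: "real m \<ge> Max ((\<lambda>w. ((real d - real w) * ln (real n) + ln (1 / \<delta>) + ln (real d ^ 2 * 2 ^ d))
             / min (ln (1 / (1 - 2 * p ^ d + 2 * p ^ (2 * d - w)))) (ln (1 / (1 + p ^ d - p ^ w)))) ` {0..d - 1})"
  shows "measure_pmf.prob (random_matrix m n p) {M. \<not> separable m n M I d} \<le> \<delta>"
proof -
  define S where "S = {J. J \<subseteq> {1..n} \<and> card J \<le> d \<and> J \<noteq> I}"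
  define D :: real where "D = real d ^ 2 * 2 ^ d"
  let ?R = "random_matrix m n p"
  have "finite S"
    by (auto simp: S_def intro: finite_subset[of _ "Pow {1..n}"])
  have "{M. \<not> separable m n M I d} = (\<Union>J\<in>S. {M. T_mat m J M = T_mat m I M})"
    by (auto simp: separable_def S_def)
  then have "measure_pmf.prob ?R {M. \<not> separable m n M I d}
      \<le> (\<Sum>J\<in>S. measure_pmf.prob ?R {M. T_mat m J M = T_mat m I M})"
    using \<open>finite S\<close> by (simp add: measure_pmf.finite_measure_subadditive_finite)
  also have "\<dots> \<le> (\<Sum>J\<in>S. \<delta> / D * (1 / real n ^ max 1 (card (J - I))))"
  proof (rule sum_mono)
    fix J assume "J \<in> S"
    then show "measure_pmf.prob ?R {M. T_mat m J M = T_mat m I M}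
        \<le> \<delta> / D * (1 / real n ^ max 1 (card (J - I)))"
      using prob_T_mat_eq_le[OF assms(3,4,5,1,2,6,7) _ _ _ m_ge, of J] by (simp add: S_def D_def)
  qed
  also have "\<dots> = \<delta> / D * (\<Sum>J\<in>S. 1 / real n ^ max 1 (card (J - I)))"
    by (simp add: sum_distrib_left)
  also have "\<dots> \<le> \<delta> / D * D"
    using sum_inverse_power_card_Diff_le[OF assms(6,1,2,7)] assms(5)
    by (intro mult_left_mono) (simp_all add: S_def D_def)
  finally show ?thesis
    using assms(2) by (simp add: D_def)
qed

theorem lemma3:
  fixes n d m :: nat and p \<delta> :: real and I :: "nat set"
  assumes "n \<ge> 1" and "d \<ge> 1"
    and "0 < p" and "p < 1" and "0 < \<delta>" and "\<delta> < 1"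
    and "I \<subseteq> {1..n}" and "card I \<le> d"
    and "m > 0"
    and "real m \<ge> Max ((\<lambda>w. ((real d - real w) * ln (real n) + ln (1 / \<delta>) + ln (real d ^ 2 * 2 ^ d))
             / min (ln (1 / (1 - 2 * p ^ d + 2 * p ^ (2 * d - w)))) (ln (1 / (1 + p ^ d - p ^ w)))) ` {0..d - 1})"
  shows "measure_pmf.prob (random_matrix m n p) {M. separable m n M I d} \<ge> 1 - \<delta>"
proof -
  have "measure_pmf.prob (random_matrix m n p) {M. \<not> separable m n M I d} \<le> \<delta>"
    using assms(1-5,7,8,10) by (rule prob_not_separable_le)
  then show ?thesis
    using measure_pmf.prob_compl[of "{M. \<not> separable m n M I d}" "random_matrix m n p"]
    by (simp add: Compl_eq_Diff_UNIV[symmetric] Collect_neg_eq[symmetric])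
qed

end
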